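(* Let $p$ be a prime. Then $\mathcal{M}_p^{(1)}\subseteq p\cdot\mathcal{N}_p=\{pm : m\in\mathcal{N}_p\}$.
   Context: For positive integers $k,n$ let $S_k(n)=\sum_{i=1}^{n} i^k$. For an integer $a$, $\mathcal{M}_a$ denotes the set of positive integers $n$ such that $S_n(n)\equiv a\pmod{n}$. For a prime $p$, $\mathcal{M}_p^{(1)}=\{n\in\mathcal{M}_p : p\mid n,\ p^2\nmid n\}$. For a prime $p$, the set of primes $\mathcal{Q}_p$ is defined recursively (by induction on $q$, since prime divisors of $q-1$ are smaller than $q$): a prime $q$ belongs to $\mathcal{Q}_p$ if and only if (a) $q-1$ is square-free, (b) $p-1\nmid q-1$, and (c) every prime divisor $t$ of $q-1$ satisfies $t=p$ or $t\in\mathcal{Q}_p$. Further, $\mathcal{N}_p$ is the set of positive integers $n$ that are square-free, satisfy $p-1\nmid n$, and all of whose prime divisors lie in $\mathcal{Q}_p$. *)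

theory Defs
  imports "HOL-Computational_Algebra.Computational_Algebra" "HOL-Number_Theory.Number_Theory"
begin

definition S :: "nat \<Rightarrow> nat \<Rightarrow> nat" where
  "S k n = (\<Sum>i=1..n. i ^ k)"

definition M :: "int \<Rightarrow> nat set" where
  "M a = {n. n > 0 \<and> [int (S n n) = a] (mod int n)}"

definition M1 :: "nat \<Rightarrow> nat set" where
  "M1 p = {n \<in> M (int p). p dvd n \<and> \<not> p^2 dvd n}"

text \<open>Membership in Q_p, defined by strong recursion on q (prime divisors of q-1 are < q).\<close>
function inQ :: "nat \<Rightarrow> nat \<Rightarrow> bool" where
  "inQ p q = (prime q \<and> squarefree (q - 1) \<and> \<not> (p - 1) dvd (q - 1) \<and>
     (\<forall>t \<in> {t. t < q}. prime t \<and> t dvd (q - 1) \<longrightarrow> t = p \<or> inQ p t))"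
  by auto
termination
  by (relation "measure (\<lambda>(p, q). q)") auto

definition Q :: "nat \<Rightarrow> nat set" where
  "Q p = {q. inQ p q}"

definition N :: "nat \<Rightarrow> nat set" where
  "N p = {n. n > 0 \<and> squarefree n \<and> \<not> (p - 1) dvd n \<and> prime_factors n \<subseteq> Q p}"

end

theory Submission
  imports Defs
begin

text \<open>For a prime q dividing n, S k n is congruent mod q to n/q copies of the power sum
over all residues mod q, which is 0 unless q - 1 divides k and -1 otherwise. Hence q can fail
to divide S k n only if q - 1 divides k and q divides n exactly once. For n \<in> M1 p we have
S n n \<equiv> p, so every prime factor q \<noteq> p of n is simple with q - 1 dividing n, while p, which
does divide S n n, forbids p - 1 dividing n. The prime factors of each such q - 1 again divide
n, so induction on q puts all prime factors of n/p into Q p.\<close>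

lemma power_sum_residues_dvd_prime:
  fixes q k :: nat
  assumes q: "prime q" and nd: "\<not> (q - 1) dvd k"
  shows "q dvd (\<Sum>i<q. i ^ k)"
proof (rule ccontr)
  define T where "T = (\<Sum>i<q. i ^ k)"
  assume "\<not> q dvd (\<Sum>i<q. i ^ k)"
  hence cop_T: "coprime T q"
    using q unfolding T_def by (metis coprime_commute prime_imp_coprime)
  obtain g where "residue_primroot q g"
    using prime_primitive_root_exists[OF prime_gt_1_nat[OF q] q] by blast
  hence cop_g: "coprime q g" and ord_g: "ord q g = q - 1"
    using q by (auto simp: residue_primroot_def totient_prime)
  text \<open>Multiplication by the primitive root g permutes the residues, so g^k T \<equiv> T.\<close>
  have "inj_on (\<lambda>i. g * i mod q) {..<q}"
  proof (rule inj_onI)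
    fix i j assume "i \<in> {..<q}" "j \<in> {..<q}" "g * i mod q = g * j mod q"
    moreover from this(3) have "[i = j] (mod q)"
      using cop_g by (metis cong_def cong_mult_lcancel_nat coprime_commute)
    ultimately show "i = j" by (simp add: cong_def)
  qed
  moreover have "(\<lambda>i. g * i mod q) ` {..<q} \<subseteq> {..<q}"
    using prime_gt_0_nat[OF q] by auto
  ultimately have perm: "bij_betw (\<lambda>i. g * i mod q) {..<q} {..<q}"
    by (simp add: bij_betw_def endo_inj_surj)
  have "[g ^ k * T = (\<Sum>i<q. (g * i) ^ k)] (mod q)"
    unfolding T_def by (simp add: power_mult_distrib sum_distrib_left)
  also have "[(\<Sum>i<q. (g * i) ^ k) = (\<Sum>i<q. (g * i mod q) ^ k)] (mod q)"
    by (intro cong_sum cong_pow) (simp add: cong_def)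
  also have "(\<Sum>i<q. (g * i mod q) ^ k) = 1 * T"
    unfolding T_def using sum.reindex_bij_betw[OF perm, of "\<lambda>i. i ^ k"] by simp
  finally have "[g ^ k = 1] (mod q)"
    using cop_T cong_mult_rcancel_nat by blast
  hence "ord q g dvd k" by (simp add: ord_divides')
  with ord_g nd show False by simp
qed

lemma power_sum_residues_cong_prime:
  fixes q k :: nat
  assumes q: "prime q" and k: "k > 0" and d: "(q - 1) dvd k"
  shows "[(\<Sum>i<q. i ^ k) = q - 1] (mod q)"
proof -
  have "{..<q} = insert 0 {1..<q}"
    using prime_gt_0_nat[OF q] by auto
  hence "(\<Sum>i<q. i ^ k) = (\<Sum>i\<in>{1..<q}. i ^ k)" using k by simp
  also have "[\<dots> = (\<Sum>i\<in>{1..<q}. 1)] (mod q)"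
  proof (rule cong_sum)
    fix i assume "i \<in> {1..<q}"
    hence "\<not> q dvd i" by (auto dest: dvd_imp_le)
    hence "[i ^ (q - 1) = 1] (mod q)" using fermat_theorem q by blast
    moreover obtain r where "k = (q - 1) * r" using d by blast
    ultimately show "[i ^ k = 1] (mod q)"
      by (metis cong_pow power_mult power_one)
  qed
  finally show ?thesis by simp
qed

lemma S_cong_power_sum_residues:
  fixes q k n :: nat
  assumes q: "q > 0" and k: "k > 0" and qn: "q dvd n"
  shows "[S k n = (n div q) * (\<Sum>i<q. i ^ k)] (mod q)"
proof -
  obtain r where r: "n = q * r" using qn by blast
  have "{..<Suc n} = insert 0 {1..n}" by auto
  hence "S k n = (\<Sum>i<Suc n. i ^ k)" using k by (simp add: S_def)
  also have "\<dots> = (\<Sum>j<r. \<Sum>i\<in>{j*q..<j*q+q}. i ^ k) + n ^ k"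
    using sum.nat_group[of "\<lambda>i. i ^ k" q r] r by (simp add: mult.commute)
  also have "\<dots> = (\<Sum>j<r. \<Sum>i<q. (i + j*q) ^ k) + n ^ k"
    using sum.shift_bounds_nat_ivl[of "\<lambda>i. i ^ k" 0 "j*q" q for j]
    by (simp add: atLeast0LessThan add.commute)
  also have "[\<dots> = (\<Sum>j<r. \<Sum>i<q. i ^ k) + 0] (mod q)"
  proof (rule cong_add)
    show "[(\<Sum>j<r. \<Sum>i<q. (i + j*q) ^ k) = (\<Sum>j<r. \<Sum>i<q. i ^ k)] (mod q)"
      by (intro cong_sum cong_pow) (simp add: cong_def)
    show "[n ^ k = 0] (mod q)"
      using dvd_trans[OF qn dvd_power[of k n]] k by (simp add: cong_0_iff)
  qed
  finally show ?thesis using r q by simp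
qed

lemma prime_dvd_S_iff:
  fixes q k n :: nat
  assumes q: "prime q" and k: "k > 0" and qn: "q dvd n"
  shows "q dvd S k n \<longleftrightarrow> ((q - 1) dvd k \<longrightarrow> q ^ 2 dvd n)"
proof -
  have q0: "q > 0" using q prime_gt_0_nat by blast
  have S_cong: "[S k n = (n div q) * (\<Sum>i<q. i ^ k)] (mod q)"
    using S_cong_power_sum_residues[OF q0 k qn] .
  show ?thesis
  proof (cases "(q - 1) dvd k")
    case True
    have "[S k n = (n div q) * (q - 1)] (mod q)"
      using S_cong cong_scalar_left cong_trans power_sum_residues_cong_prime[OF q k True]
      by blast
    hence "q dvd S k n \<longleftrightarrow> q dvd (n div q) * (q - 1)" by (rule cong_dvd_iff)
    also have "\<dots> \<longleftrightarrow> q dvd n div q"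
    proof -
      have "\<not> q dvd q - 1"
        using prime_gt_1_nat[OF q] by (intro nat_dvd_not_less) auto
      thus ?thesis using q prime_dvd_mult_iff by blast
    qed
    also have "\<dots> \<longleftrightarrow> q ^ 2 dvd n"
      using qn q0 by (auto simp: power2_eq_square dvd_div_iff_mult)
    finally show ?thesis using True by simp
  next
    case False
    then show ?thesis
      using S_cong power_sum_residues_dvd_prime[OF q False] by (simp add: cong_dvd_iff)
  qed
qed

lemma prime_factors_subset_Q:
  fixes p n :: nat
  assumes p: "prime p" and sq: "squarefree n" and np: "\<not> (p - 1) dvd n"
    and closed: "\<And>q. prime q \<Longrightarrow> q dvd n \<Longrightarrow> q \<noteq> p \<Longrightarrow> (q - 1) dvd n"
  shows "prime_factors n - {p} \<subseteq> Q p"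
proof -
  have "prime q \<longrightarrow> q dvd n \<longrightarrow> q \<noteq> p \<longrightarrow> inQ p q" for q
  proof (induction q rule: less_induct)
    case (less q)
    show ?case
    proof (intro impI)
      assume q: "prime q" "q dvd n" "q \<noteq> p"
      have d: "(q - 1) dvd n" using closed q by blast
      have "\<forall>t \<in> {t. t < q}. prime t \<and> t dvd (q - 1) \<longrightarrow> t = p \<or> inQ p t"
        using less.IH d dvd_trans by blast
      moreover have "squarefree (q - 1)" using squarefree_mono[OF d sq] .
      moreover have "\<not> (p - 1) dvd (q - 1)" using d np dvd_trans by blast
      ultimately show "inQ p q" using q by (subst inQ.simps) blast
    qed
  qed
  thus ?thesis unfolding Q_def by (auto simp del: inQ.simps simp: in_prime_factors_iff)
qed

lemma M1_memberD:
  assumes "n \<in> M1 p"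
  shows "n > 0" "[S n n = p] (mod n)" "p dvd n" "\<not> p ^ 2 dvd n"
  using assms by (auto simp: M1_def M_def cong_int_iff)

lemma M1_other_prime_factor:
  assumes p: "prime p" and n: "n \<in> M1 p" and q: "prime q" "q dvd n" "q \<noteq> p"
  shows "(q - 1) dvd n" "\<not> q ^ 2 dvd n"
proof -
  have "[S n n = p] (mod q)"
    using cong_dvd_modulus_nat[OF M1_memberD(2)[OF n] q(2)] .
  hence "\<not> q dvd S n n"
    using p q by (metis cong_dvd_iff primes_dvd_imp_eq)
  thus "(q - 1) dvd n" "\<not> q ^ 2 dvd n"
    using prime_dvd_S_iff[OF q(1) M1_memberD(1)[OF n] q(2)] by blast+
qed

lemma M1_squarefree:
  assumes p: "prime p" and n: "n \<in> M1 p"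
  shows "squarefree n"
proof -
  have "\<not> q ^ 2 dvd n" if q: "prime q" for q
  proof
    assume "q ^ 2 dvd n"
    moreover from this have "q dvd n" by (simp add: power2_eq_square dvd_mult_left)
    ultimately show False
      using M1_other_prime_factor[OF p n q] M1_memberD(4)[OF n] by blast
  qed
  thus ?thesis using M1_memberD(1)[OF n] squarefree_factorial_semiring by blast
qed

lemma M1_not_pred_dvd:
  assumes p: "prime p" and n: "n \<in> M1 p"
  shows "\<not> (p - 1) dvd n"
proof -
  note n_props = M1_memberD[OF n]
  have "p dvd S n n"
    using cong_dvd_modulus_nat[OF n_props(2,3)] by (simp add: cong_dvd_iff)
  thus ?thesis using prime_dvd_S_iff[OF p n_props(1,3)] n_props(4) by blast
qed

theorem mainTheorem4:
  fixes p :: nat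
  assumes "prime p"
  shows "M1 p \<subseteq> {p * m | m. m \<in> N p}"
proof
  fix n assume n: "n \<in> M1 p"
  define m where "m = n div p"
  have nm: "n = p * m" using M1_memberD(3)[OF n] by (simp add: m_def)
  have sq: "squarefree n" and np: "\<not> (p - 1) dvd n"
    using M1_squarefree[OF assms n] M1_not_pred_dvd[OF assms n] .
  have "p \<notin> prime_factors m"
    using M1_memberD(4)[OF n] nm by (auto simp: power2_eq_square)
  hence "prime_factors m \<subseteq> prime_factors n - {p}"
    using nm M1_memberD(1)[OF n] by (auto simp: in_prime_factors_iff)
  also have "\<dots> \<subseteq> Q p"
    using prime_factors_subset_Q[OF assms sq np] M1_other_prime_factor[OF assms n] by blast
  finally have "m \<in> N p"
    using M1_memberD(1)[OF n] nm sq np squarefree_mono[of m n] by (auto simp: N_def)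
  with nm show "n \<in> {p * m | m. m \<in> N p}" by blast
qed

end
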